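(* Let $d\ge2$ and let $v=(v_1,\dots,v_d)\in\mathbb{R}^d$ satisfy $\sum_j v_j=1$ and $\sum_j v_j^2=d$. Let $v_{\max}=\max_j v_j$ and $v_{\min}=\min_j v_j$. Then $$\frac{(d-1)v_{\max}-(d+1)v_{\min}}{2}\le\frac{d-1}{\sqrt2\,d}\sqrt{(d+1)(d^2+d+2)}-\frac1d,$$ with equality if and only if the components of $v$ in nonincreasing order $v^\downarrow$ satisfy, with $s=\sqrt{\frac{d+1}{2(d^2+d+2)}}$, $$v^\downarrow_1=\frac1d+\frac{d^2-d+2}{d}s,\quad v^\downarrow_2=\dots=v^\downarrow_{d-1}=\frac1d+\frac2d s,\quad v^\downarrow_d=\frac1d-\frac{d^2+d-2}{d}s.$$ *)

theory Defs
  imports Complex_Main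
begin

definition sorted_desc :: "nat \<Rightarrow> (nat \<Rightarrow> real) \<Rightarrow> real list" where
  "sorted_desc d v = rev (sort (map v [0..<d]))"

end

theory Submission
  imports Defs "HOL-Library.Multiset"
begin

text \<open>
  Fix distinct indices \<open>i, k\<close> and compare \<open>v\<close> with the profile \<open>u\<close> that takes the top value
  \<open>1/d + (d\<^sup>2-d+2)s/d\<close> at \<open>i\<close>, the bottom value \<open>1/d - (d\<^sup>2+d-2)s/d\<close> at \<open>k\<close> and
  \<open>1/d + 2s/d\<close> elsewhere. Expanding \<open>\<Sum>\<^sub>j (v\<^sub>j - u\<^sub>j)\<^sup>2\<close> with the two moment
  constraints leaves only \<open>v\<^sub>i\<close> and \<open>v\<^sub>k\<close>, and for this particular \<open>s\<close> the identity reads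
  \<open>\<Sum>\<^sub>j (v\<^sub>j - u\<^sub>j)\<^sup>2 / 4s = B - ((d-1)v\<^sub>i - (d+1)v\<^sub>k)/2\<close>.
  Hence the spread at any pair is at most \<open>B\<close>, with equality iff \<open>v = u\<close>. Taking \<open>i, k\<close> at a
  maximum and a minimum (distinct, since the moments exclude constant vectors) gives the bound,
  and in the equality case the sorted components are those of \<open>u\<close>.
\<close>

lemma sum_square_deviation:
  fixes f :: "'a \<Rightarrow> 'b::comm_ring_1"
  shows "(\<Sum>j\<in>R. (f j - c)^2) = (\<Sum>j\<in>R. (f j)^2) - 2 * c * sum f R + of_nat (card R) * c^2"
proof -
  have "(\<Sum>j\<in>R. (f j - c)^2) = (\<Sum>j\<in>R. (f j)^2 - 2 * c * f j + c^2)"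
    by (intro sum.cong refl) (simp add: power2_eq_square algebra_simps)
  then show ?thesis
    by (simp add: sum.distrib sum_subtractf sum_distrib_left)
qed

lemma sum_remove_two:
  assumes "finite A" "i \<in> A" "k \<in> A" "i \<noteq> k"
  shows "sum f A = f i + f k + sum f (A - {i, k})"
proof -
  have "sum f A = f i + sum f (A - {i})"
    using assms by (simp add: sum.remove)
  also have "sum f (A - {i}) = f k + sum f (A - {i} - {k})"
    using assms by (simp add: sum.remove)
  also have "A - {i} - {k} = A - {i, k}"
    by auto
  finally show ?thesis
    by (simp add: add.assoc)
qed

lemma moments_force_spread:
  fixes v :: "nat \<Rightarrow> real"
  assumes "d \<ge> 2" "(\<Sum>j<d. v j) = 1" "(\<Sum>j<d. (v j)^2) = real d"
  shows "Min (v ` {..<d}) < Max (v ` {..<d})"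
proof (rule ccontr)
  assume "\<not> Min (v ` {..<d}) < Max (v ` {..<d})"
  then have const: "v j = v 0" if "j < d" for j
  proof -
    have bounds: "Min (v ` {..<d}) \<le> v i \<and> v i \<le> Max (v ` {..<d})" if "i < d" for i
      using that by simp
    show ?thesis
      using bounds[OF that] bounds[of 0] assms(1) \<open>\<not> _ < _\<close> by linarith
  qed
  have "(\<Sum>j<d. v j) = (\<Sum>j<d. v 0)" "(\<Sum>j<d. (v j)^2) = (\<Sum>j<d. (v 0)^2)"
    by (intro sum.cong refl; metis const lessThan_iff)+
  then have mean: "real d * v 0 = 1" and square_mean: "real d * (v 0)^2 = real d"
    using assms(2,3) by simp_all
  have "real d * real d = real d * (real d * (v 0)^2)"
    using square_mean by simp
  also have "\<dots> = (real d * v 0)^2"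
    by (simp add: power2_eq_square)
  also have "\<dots> = 1"
    using mean by simp
  finally have "real d * real d = 1" .
  moreover have "2 * 2 \<le> real d * real d"
    using assms(1) by (intro mult_mono) auto
  ultimately show False
    by simp
qed

lemma extremal_indices:
  fixes v :: "nat \<Rightarrow> real"
  assumes "d \<ge> 2" "(\<Sum>j<d. v j) = 1" "(\<Sum>j<d. (v j)^2) = real d"
  obtains i k where "i < d" "k < d" "i \<noteq> k"
    and "v i = Max (v ` {..<d})" "v k = Min (v ` {..<d})"
proof -
  have fin: "finite (v ` {..<d})" and ne: "v ` {..<d} \<noteq> {}"
    using assms(1) by (auto simp: lessThan_empty_iff)
  obtain i k where "i < d" "v i = Max (v ` {..<d})" "k < d" "v k = Min (v ` {..<d})"
    using Max_in[OF fin ne] Min_in[OF fin ne] by auto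
  moreover have "i \<noteq> k"
    using moments_force_spread[OF assms] calculation by auto
  ultimately show thesis
    using that by blast
qed

lemma optimal_scale:
  fixes D :: real
  assumes "D \<ge> 2"
  defines "s \<equiv> sqrt ((D + 1) / (2 * (D^2 + D + 2)))"
  shows "s > 0" and "(D - 1) * (D^2 + D + 2) * s^2 = (D^2 - 1) / 2"
proof -
  have P: "D^2 + D + 2 > 0"
    using assms(1) by (simp add: add_pos_pos)
  then show "s > 0"
    using assms(1) unfolding s_def by simp
  have "s^2 = (D + 1) / (2 * (D^2 + D + 2))"
    unfolding s_def using assms(1) P by simp
  then show "(D - 1) * (D^2 + D + 2) * s^2 = (D^2 - 1) / 2"
    using P by (simp only:) (simp add: field_simps power2_eq_square)
qed

lemma bound_eq_scaled:
  fixes D :: real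
  assumes "D \<ge> 2"
  defines "s \<equiv> sqrt ((D + 1) / (2 * (D^2 + D + 2)))"
  shows "(D - 1) / (sqrt 2 * D) * sqrt ((D + 1) * (D^2 + D + 2)) - 1 / D = (D^2 - 1 - 2 * s) / (2 * D * s)"
proof -
  define P where "P = D^2 + D + 2"
  have P: "P > 0" using assms(1) unfolding P_def by (simp add: add_pos_pos)
  have s: "s > 0" using optimal_scale(1)[OF assms(1)] unfolding s_def .
  have "s * (sqrt 2 * sqrt ((D + 1) * P)) = sqrt ((D + 1)^2)"
    unfolding s_def P_def[symmetric] using P by (simp add: real_sqrt_mult[symmetric] field_simps power2_eq_square)
  then have "sqrt ((D + 1) * P) = (D + 1) / (s * sqrt 2)"
    using assms(1) s by (simp add: field_simps)
  then have "(D - 1) / (sqrt 2 * D) * sqrt ((D + 1) * P) = (D - 1) / (sqrt 2 * D) * ((D + 1) / (s * sqrt 2))"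
    by (simp only:)
  also have "\<dots> = (D^2 - 1) / (2 * D * s)"
    using assms(1) s by (simp add: field_simps power2_eq_square)
  finally show ?thesis
    unfolding P_def using assms(1) s by (simp add: diff_divide_distrib)
qed

lemma extremal_profile_ordered:
  fixes D s :: real
  assumes "D \<ge> 2" "s \<ge> 0"
  shows "1/D - (D^2 + D - 2)/D * s \<le> 1/D + 2/D * s"
    and "1/D + 2/D * s \<le> 1/D + (D^2 - D + 2)/D * s"
proof -
  have "D \<le> D^2"
    using mult_right_mono[of 1 D D] assms(1) by (simp add: power2_eq_square)
  then have "0 \<le> (D^2 + D - 2)/D * s" "0 \<le> 2/D * s" "2/D * s \<le> (D^2 - D + 2)/D * s"
    using assms by (auto intro!: mult_right_mono divide_right_mono)
  then show "1/D - (D^2 + D - 2)/D * s \<le> 1/D + 2/D * s"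
       and "1/D + 2/D * s \<le> 1/D + (D^2 - D + 2)/D * s"
    by linarith+
qed

lemma extremal_profile_spread:
  fixes D :: real
  assumes "D \<ge> 2"
  defines "s \<equiv> sqrt ((D + 1) / (2 * (D^2 + D + 2)))"
  shows "((D - 1) * (1/D + (D^2 - D + 2)/D * s) - (D + 1) * (1/D - (D^2 + D - 2)/D * s)) / 2
         = (D^2 - 1 - 2 * s) / (2 * D * s)"
proof -
  have s: "s > 0" and scale: "(D - 1) * (D^2 + D + 2) * s^2 = (D^2 - 1) / 2"
    using optimal_scale[OF assms(1)] unfolding s_def by auto
  have "((D - 1) * (1/D + (D^2 - D + 2)/D * s) - (D + 1) * (1/D - (D^2 + D - 2)/D * s)) / 2
        = ((D - 1) * (D^2 + D + 2) * s^2 - s) / (D * s)"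
    using assms(1) s by (simp add: field_simps power2_eq_square)
  then show ?thesis
    unfolding scale using assms(1) s by (simp add: field_simps)
qed

lemma set_sorted_desc: "set (sorted_desc d v) = v ` {..<d}"
  unfolding sorted_desc_def by auto

lemma sorted_desc_three_levels:
  assumes "i < d" "k < d" "i \<noteq> k"
    and "v i = a" "v k = b" "\<And>j. j \<in> {..<d} - {i, k} \<Longrightarrow> v j = c"
    and "b \<le> c" "c \<le> a"
  shows "sorted_desc d v = [a] @ replicate (d - 2) c @ [b]"
proof -
  let ?R = "{..<d} - {i, k}" and ?T = "[a] @ replicate (d - 2) c @ [b]"
  have "mset (map v [0..<d]) = image_mset v (mset_set {..<d})"
    by (simp flip: atLeast0LessThan)
  also have "mset_set {..<d} = add_mset i (add_mset k (mset_set ?R))"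
  proof -
    have "{..<d} = insert i (insert k ?R)" "i \<notin> insert k ?R" "k \<notin> ?R"
      using assms(1-3) by auto
    then show ?thesis
      by (metis finite_Diff finite_lessThan finite_insert mset_set.insert)
  qed
  also have "image_mset v (add_mset i (add_mset k (mset_set ?R)))
      = add_mset a (add_mset b (image_mset v (mset_set ?R)))"
    using assms(4,5) by simp
  also have "image_mset v (mset_set ?R) = image_mset (\<lambda>_. c) (mset_set ?R)"
    using assms(6) by (intro image_mset_cong) auto
  also have "\<dots> = replicate_mset (d - 2) c"
    using assms(1-3) by (simp add: image_mset_const_eq card_Diff_subset numeral_2_eq_2)
  finally have "mset (map v [0..<d]) = mset (rev ?T)"
    by (simp add: add_mset_commute)
  moreover have "sorted (rev ?T)"
    using assms(7,8) by (auto simp: sorted_append)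
  ultimately show ?thesis
    unfolding sorted_desc_def by (metis properties_for_sort rev_rev_ident)
qed

lemma sorted_desc_three_levels_extrema:
  assumes "sorted_desc d v = [a] @ replicate (d - 2) c @ [b]" "b \<le> c" "c \<le> a"
  shows "Max (v ` {..<d}) = a" and "Min (v ` {..<d}) = b"
  unfolding set_sorted_desc[symmetric] assms(1) using assms(2,3)
  by (intro Max_eqI Min_eqI; auto)+

lemma extremal_profile_deviation:
  fixes v :: "nat \<Rightarrow> real" and s :: real
  assumes "d \<ge> 2" "i < d" "k < d" "i \<noteq> k"
    and "(\<Sum>j<d. v j) = 1" "(\<Sum>j<d. (v j)^2) = real d"
  defines "D \<equiv> real d"
  shows "((v i - (1/D + (D^2 - D + 2)/D * s))^2 + (v k - (1/D - (D^2 + D - 2)/D * s))^2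
           + (\<Sum>j\<in>{..<d} - {i, k}. (v j - (1/D + 2/D * s))^2)) * D / 2
         = (D^2 - 1)/2 - 2 * s - D * s * ((D - 1) * v i - (D + 1) * v k) + (D - 1) * (D^2 + D + 2) * s^2"
proof -
  let ?R = "{..<d} - {i, k}" and ?c = "1/D + 2/D * s"
  have "sum v ?R = 1 - v i - v k" "(\<Sum>j\<in>?R. (v j)^2) = D - (v i)^2 - (v k)^2"
    using sum_remove_two[of "{..<d}" i k v] sum_remove_two[of "{..<d}" i k "\<lambda>j. (v j)^2"] assms
    by auto
  moreover have "real (card ?R) = D - 2"
    using assms(1-4) unfolding D_def by (simp add: card_Diff_subset of_nat_diff)
  ultimately have rest: "(\<Sum>j\<in>?R. (v j - ?c)^2)
      = (D - (v i)^2 - (v k)^2) - 2 * ?c * (1 - v i - v k) + (D - 2) * ?c^2"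
    by (simp only: sum_square_deviation)
  have "D \<ge> 2"
    using assms(1) unfolding D_def by simp
  then show ?thesis
    unfolding rest by (simp add: field_simps power2_eq_square)
qed

lemma spread_bound_at_pair:
  fixes v :: "nat \<Rightarrow> real"
  assumes "d \<ge> 2" "i < d" "k < d" "i \<noteq> k"
    and "(\<Sum>j<d. v j) = 1" "(\<Sum>j<d. (v j)^2) = real d"
  defines "D \<equiv> real d"
    and "s \<equiv> sqrt ((real d + 1) / (2 * (real d ^ 2 + real d + 2)))"
  shows "((D - 1) * v i - (D + 1) * v k) / 2 \<le> (D^2 - 1 - 2 * s) / (2 * D * s)"
    and "((D - 1) * v i - (D + 1) * v k) / 2 = (D^2 - 1 - 2 * s) / (2 * D * s)
         \<longleftrightarrow> v i = 1/D + (D^2 - D + 2)/D * s \<and> v k = 1/D - (D^2 + D - 2)/D * s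
             \<and> (\<forall>j\<in>{..<d} - {i, k}. v j = 1/D + 2/D * s)"
proof -
  define L where "L = ((D - 1) * v i - (D + 1) * v k) / 2"
  define Q where "Q = (v i - (1/D + (D^2 - D + 2)/D * s))^2 + (v k - (1/D - (D^2 + D - 2)/D * s))^2
           + (\<Sum>j\<in>{..<d} - {i, k}. (v j - (1/D + 2/D * s))^2)"
  have D: "D \<ge> 2"
    using assms(1) unfolding D_def by simp
  have s: "s > 0" and scale: "(D - 1) * (D^2 + D + 2) * s^2 = (D^2 - 1) / 2"
    using optimal_scale[of "real d"] assms(1) unfolding s_def D_def by auto
  have "Q * D / 2 = (D^2 - 1)/2 - 2 * s - D * s * ((D - 1) * v i - (D + 1) * v k) + (D - 1) * (D^2 + D + 2) * s^2"
    unfolding Q_def D_def by (rule extremal_profile_deviation[OF assms(1-6)])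
  then have deviation: "D^2 - 1 - 2 * s - 2 * D * s * L = Q * D / 2"
    unfolding scale L_def by (simp add: field_simps)
  have gap: "(D^2 - 1 - 2 * s) / (2 * D * s) - L = Q / (4 * s)"
  proof -
    have "(D^2 - 1 - 2 * s) / (2 * D * s) - L = (D^2 - 1 - 2 * s - 2 * D * s * L) / (2 * D * s)"
      using D s by (simp add: field_simps)
    also have "\<dots> = Q / (4 * s)"
      unfolding deviation using D s by (simp add: field_simps)
    finally show ?thesis .
  qed
  have "Q \<ge> 0"
    unfolding Q_def by (intro add_nonneg_nonneg sum_nonneg) auto
  then show "L \<le> (D^2 - 1 - 2 * s) / (2 * D * s)"
    using gap s by (smt (verit) divide_nonneg_pos)
  have "L = (D^2 - 1 - 2 * s) / (2 * D * s) \<longleftrightarrow> Q = 0"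
    using gap s by auto
  also have "\<dots> \<longleftrightarrow> v i = 1/D + (D^2 - D + 2)/D * s \<and> v k = 1/D - (D^2 + D - 2)/D * s
             \<and> (\<forall>j\<in>{..<d} - {i, k}. v j = 1/D + 2/D * s)"
    unfolding Q_def by (simp add: add_nonneg_eq_0_iff sum_nonneg sum_nonneg_eq_0_iff)
  finally show "L = (D^2 - 1 - 2 * s) / (2 * D * s) \<longleftrightarrow> \<dots>" .
qed

theorem lemmaS3:
  fixes d :: nat and v :: "nat \<Rightarrow> real"
  assumes "d \<ge> 2"
    and "(\<Sum>j<d. v j) = 1"
    and "(\<Sum>j<d. (v j)^2) = real d"
  defines "vmax \<equiv> Max (v ` {..<d})"
    and "vmin \<equiv> Min (v ` {..<d})"
    and "s \<equiv> sqrt ((real d + 1) / (2 * (real d ^ 2 + real d + 2)))"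
    and "B \<equiv> (real d - 1) / (sqrt 2 * real d) * sqrt ((real d + 1) * (real d ^ 2 + real d + 2)) - 1 / real d"
  shows "((real d - 1) * vmax - (real d + 1) * vmin) / 2 \<le> B
         \<and> (((real d - 1) * vmax - (real d + 1) * vmin) / 2 = B
            \<longleftrightarrow> sorted_desc d v =
                 [1 / real d + (real d ^ 2 - real d + 2) / real d * s]
                 @ replicate (d - 2) (1 / real d + 2 / real d * s)
                 @ [1 / real d - (real d ^ 2 + real d - 2) / real d * s])"
proof -
  define D where "D = real d"
  define L where "L = ((D - 1) * vmax - (D + 1) * vmin) / 2"
  define T where "T = [1/D + (D^2 - D + 2)/D * s] @ replicate (d - 2) (1/D + 2/D * s)
                      @ [1/D - (D^2 + D - 2)/D * s]"
  have D: "D \<ge> 2"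
    using assms(1) unfolding D_def by simp
  have B: "B = (D^2 - 1 - 2 * s) / (2 * D * s)"
    using bound_eq_scaled[of "real d"] assms(1) unfolding B_def s_def D_def by simp
  have "s > 0"
    using optimal_scale(1)[of "real d"] assms(1) unfolding s_def by simp
  obtain i k where i: "i < d" "v i = vmax" and k: "k < d" "v k = vmin" and "i \<noteq> k"
    using extremal_indices[OF assms(1-3)] unfolding vmax_def vmin_def by metis
  note pair = spread_bound_at_pair[OF assms(1) i(1) k(1) \<open>i \<noteq> k\<close> assms(2,3)]
  have "L \<le> B"
    using pair(1) unfolding L_def B D_def s_def i(2) k(2) .
  have extremal_iff: "L = B \<longleftrightarrow> vmax = 1/D + (D^2 - D + 2)/D * s \<and> vmin = 1/D - (D^2 + D - 2)/D * s
             \<and> (\<forall>j\<in>{..<d} - {i, k}. v j = 1/D + 2/D * s)"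
    using pair(2) unfolding L_def B D_def s_def i(2) k(2) .
  have ordered: "1/D - (D^2 + D - 2)/D * s \<le> 1/D + 2/D * s" "1/D + 2/D * s \<le> 1/D + (D^2 - D + 2)/D * s"
    using extremal_profile_ordered[OF D] \<open>s > 0\<close> by simp_all
  have "L = B \<longleftrightarrow> sorted_desc d v = T"
  proof
    assume "L = B"
    then show "sorted_desc d v = T"
      using extremal_iff i k \<open>i \<noteq> k\<close> ordered unfolding T_def by (intro sorted_desc_three_levels) auto
  next
    assume "sorted_desc d v = T"
    then have "vmax = 1/D + (D^2 - D + 2)/D * s" "vmin = 1/D - (D^2 + D - 2)/D * s"
      using sorted_desc_three_levels_extrema ordered unfolding T_def vmax_def vmin_def by blast+
    moreover have "((D - 1) * (1/D + (D^2 - D + 2)/D * s) - (D + 1) * (1/D - (D^2 + D - 2)/D * s)) / 2 = B"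
      unfolding B D_def s_def by (rule extremal_profile_spread) (use assms(1) in simp)
    ultimately show "L = B"
      unfolding L_def by simp
  qed
  with \<open>L \<le> B\<close> show ?thesis
    unfolding L_def T_def D_def by blast
qed

end
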